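(* Let $n\ge1$, $0<\hat\theta<1$ with $n\hat\theta$ an integer, and $\alpha>0$ with $\alpha\le n\hat\theta^2(1-\hat\theta)^2/8$. Then there is a solution $\gamma_\alpha>0$ of $-\log P_{\mathrm{CH},n}\big(\hat\theta\,\big|\,\varphi(\gamma_\alpha,\hat\theta)\big)=\alpha$ satisfying $$\gamma_\alpha\in\sqrt{2\alpha}\left(1+\frac52\frac{\sqrt\alpha}{\sqrt{n\hat\theta(1-\hat\theta)}}[-1,1]\right)^{-1/2},$$ i.e. $\sqrt{2\alpha}\,(1+\epsilon)^{-1/2}\le\gamma_\alpha\le\sqrt{2\alpha}\,(1-\epsilon)^{-1/2}$ with $\epsilon=\frac52\sqrt\alpha/\sqrt{n\hat\theta(1-\hat\theta)}$.
   Context: Logarithms are natural. $P_{\mathrm{CH},n}(t|\varphi)=\left(\frac{\varphi}{t}\right)^{nt}\left(\frac{1-\varphi}{1-t}\right)^{n(1-t)}$ if $t\ge\varphi$, and $=1$ otherwise. With $\hat\sigma=\sqrt{\hat\theta(1-\hat\theta)/n}$, $\varphi(\gamma,\hat\theta)=\hat\theta-\hat\sigma\gamma$. *)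

theory Defs
  imports "HOL-Analysis.Analysis"
begin

definition P_CH :: "nat \<Rightarrow> real \<Rightarrow> real \<Rightarrow> real" where
  "P_CH n t \<phi> = (if t \<ge> \<phi>
     then (\<phi> / t) powr (real n * t) * ((1 - \<phi>) / (1 - t)) powr (real n * (1 - t))
     else 1)"

definition sigma_hat :: "nat \<Rightarrow> real \<Rightarrow> real" where
  "sigma_hat n \<theta> = sqrt (\<theta> * (1 - \<theta>) / real n)"

definition varphi :: "nat \<Rightarrow> real \<Rightarrow> real \<Rightarrow> real" where
  "varphi n \<gamma> \<theta> = \<theta> - sigma_hat n \<theta> * \<gamma>"

end

theory Submission
  imports Defs
begin

(* Put \<phi> = \<theta> - \<theta>(1-\<theta>) t, i.e. \<gamma> = sqrt (n \<theta>(1-\<theta>)) t. Then -log P_CH = n KL(\<theta> || \<phi>), and along this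
   path the derivative of the divergence is (\<theta>(1-\<theta>))\<^sup>2 t / (\<phi>(1-\<phi>)) with
   \<theta>(1-\<theta>)(1-t) \<le> \<phi>(1-\<phi>) \<le> \<theta>(1-\<theta>)(1+t). Integrating gives
   \<theta>(1-\<theta>)(t\<^sup>2/2 - t\<^sup>3/3) \<le> KL \<le> \<theta>(1-\<theta>)(t\<^sup>2/2 + 2t\<^sup>3/3) for small t. Writing \<alpha> = n \<theta>(1-\<theta>) a\<^sup>2, these
   bounds place the level a\<^sup>2 between the values of KL/(\<theta>(1-\<theta>)) at the two ends of the claimed
   interval, and the intermediate value theorem supplies \<gamma>. *)

lemma DERIV_le_imp_le:
  fixes f g f' g' :: "real \<Rightarrow> real"
  assumes "a \<le> b" "f a = g a"
    and "\<And>x. a \<le> x \<Longrightarrow> x \<le> b \<Longrightarrow> (f has_real_derivative f' x) (at x)"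
    and "\<And>x. a \<le> x \<Longrightarrow> x \<le> b \<Longrightarrow> (g has_real_derivative g' x) (at x)"
    and "\<And>x. a \<le> x \<Longrightarrow> x \<le> b \<Longrightarrow> f' x \<le> g' x"
  shows "f b \<le> g b"
proof -
  have "(\<lambda>x. g x - f x) a \<le> (\<lambda>x. g x - f x) b"
  proof (rule DERIV_nonneg_imp_nondecreasing[OF assms(1)])
    fix x assume "a \<le> x" "x \<le> b"
    then show "\<exists>y. ((\<lambda>x. g x - f x) has_real_derivative y) (at x) \<and> 0 \<le> y"
      using assms(3-5) by (intro exI[of _ "g' x - f' x"]) (auto intro: DERIV_diff)
  qed
  with assms(2) show ?thesis by simp
qed

lemma powr_minus_half: "0 \<le> (x::real) \<Longrightarrow> x powr - (1/2) = 1 / sqrt x"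
  by (simp add: powr_minus_divide powr_half_sqrt)

definition bernoulli_kl :: "real \<Rightarrow> real \<Rightarrow> real" where
  "bernoulli_kl \<theta> \<phi> = \<theta> * (ln \<theta> - ln \<phi>) + (1 - \<theta>) * (ln (1 - \<theta>) - ln (1 - \<phi>))"

lemma neg_ln_P_CH_eq_bernoulli_kl:
  assumes "0 < \<phi>" "\<phi> \<le> \<theta>" "\<theta> < 1"
  shows "- ln (P_CH n \<theta> \<phi>) = real n * bernoulli_kl \<theta> \<phi>"
proof -
  have pos: "0 < \<phi> / \<theta>" "0 < (1 - \<phi>) / (1 - \<theta>)" using assms by auto
  have "ln (P_CH n \<theta> \<phi>) = real n * \<theta> * ln (\<phi> / \<theta>) + real n * (1 - \<theta>) * ln ((1 - \<phi>) / (1 - \<theta>))"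
    using assms pos by (simp add: P_CH_def ln_mult_pos ln_powr)
  then show ?thesis
    using assms by (simp add: bernoulli_kl_def ln_div algebra_simps)
qed

lemma has_real_derivative_bernoulli_kl:
  assumes "0 < \<phi>" "\<phi> < 1"
  shows "(bernoulli_kl \<theta> has_real_derivative (\<phi> - \<theta>) / (\<phi> * (1 - \<phi>))) (at \<phi>)"
proof -
  have "(bernoulli_kl \<theta> has_real_derivative \<theta> * (- (1 / \<phi>)) + (1 - \<theta>) * (- (- 1 / (1 - \<phi>)))) (at \<phi>)"
    unfolding bernoulli_kl_def using assms
    by (auto intro!: derivative_eq_intros)
  also have "\<theta> * (- (1 / \<phi>)) + (1 - \<theta>) * (- (- 1 / (1 - \<phi>))) = (\<phi> - \<theta>) / (\<phi> * (1 - \<phi>))"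
    using assms by (simp add: field_simps)
  finally show ?thesis .
qed

lemma bernoulli_variance_along_path:
  fixes \<theta> t :: real
  assumes "0 < \<theta>" "\<theta> < 1" "0 \<le> t" "t \<le> 1"
  defines "v \<equiv> \<theta> * (1 - \<theta>)"
  shows "v * (1 - t) \<le> (\<theta> - v * t) * (1 - (\<theta> - v * t))"
    and "(\<theta> - v * t) * (1 - (\<theta> - v * t)) \<le> v * (1 + t)"
proof -
  have expand: "(\<theta> - v * t) * (1 - (\<theta> - v * t)) = v + v * t * (2 * \<theta> - 1) - (v * t)\<^sup>2"
    by (simp add: v_def algebra_simps power2_eq_square)
  have "(1 - \<theta>) * t \<le> 1" using assms by (simp add: mult_le_one)
  then have "0 \<le> v * t" "v * t \<le> 2 * \<theta>" "2 * \<theta> - 1 \<le> 1"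
    using assms by (auto simp: v_def mult.assoc mult_left_le)
  then have "(v * t)\<^sup>2 \<le> v * t * (2 * \<theta>)"
    by (simp add: power2_eq_square mult_left_mono)
  then show "v * (1 - t) \<le> (\<theta> - v * t) * (1 - (\<theta> - v * t))"
    unfolding expand by (simp add: algebra_simps)
  show "(\<theta> - v * t) * (1 - (\<theta> - v * t)) \<le> v * (1 + t)"
    unfolding expand distrib_left mult_1_right
    using mult_left_le[OF \<open>2 * \<theta> - 1 \<le> 1\<close> \<open>0 \<le> v * t\<close>] zero_le_power2[of "v * t"]
    by linarith
qed

lemma has_real_derivative_bernoulli_kl_path:
  fixes \<theta> t :: real
  assumes "0 < \<theta>" "\<theta> < 1" "0 \<le> t" "t < 1"
  defines "v \<equiv> \<theta> * (1 - \<theta>)"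
  shows "((\<lambda>t. bernoulli_kl \<theta> (\<theta> - v * t)) has_real_derivative
           v * (v * t) / ((\<theta> - v * t) * (1 - (\<theta> - v * t)))) (at t)"
proof -
  have "v * t \<le> v" using assms by (simp add: v_def mult_left_le)
  moreover have "v < \<theta>" "0 \<le> v * t" using assms by (simp_all add: v_def)
  ultimately have "0 < \<theta> - v * t" "\<theta> - v * t < 1" using assms by linarith+
  note outer = has_real_derivative_bernoulli_kl[OF this, of \<theta>]
  have inner: "((\<lambda>t. \<theta> - v * t) has_real_derivative - v) (at t)"
    by (auto intro!: derivative_eq_intros)
  from DERIV_chain2[OF outer inner] show ?thesis by (simp add: field_simps)
qed

lemma bernoulli_kl_path_upper:
  fixes \<theta> t :: real
  assumes "0 < \<theta>" "\<theta> < 1" "0 \<le> t" "t \<le> 1/2"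
  defines "v \<equiv> \<theta> * (1 - \<theta>)"
  shows "bernoulli_kl \<theta> (\<theta> - v * t) \<le> v * (t\<^sup>2 / 2 + 2/3 * t ^ 3)"
proof (rule DERIV_le_imp_le[OF assms(3)])
  fix x assume x: "0 \<le> x" "x \<le> t"
  show "((\<lambda>t. bernoulli_kl \<theta> (\<theta> - v * t)) has_real_derivative
          v * (v * x) / ((\<theta> - v * x) * (1 - (\<theta> - v * x)))) (at x)"
    using assms x unfolding v_def by (intro has_real_derivative_bernoulli_kl_path) auto
  show "((\<lambda>t. v * (t\<^sup>2 / 2 + 2/3 * t ^ 3)) has_real_derivative v * (x + 2 * x\<^sup>2)) (at x)"
    by (auto intro!: derivative_eq_intros simp: algebra_simps power2_eq_square)
  have v: "0 < v" using assms by (simp add: v_def)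
  have "0 < v * (1 - x)" using v assms x by simp
  moreover have "v * (1 - x) \<le> (\<theta> - v * x) * (1 - (\<theta> - v * x))"
    using bernoulli_variance_along_path(1)[of \<theta> x] assms x by (simp add: v_def)
  ultimately have "v * (v * x) / ((\<theta> - v * x) * (1 - (\<theta> - v * x))) \<le> v * (v * x) / (v * (1 - x))"
    using v x by (intro divide_left_mono) auto
  also have "\<dots> = v * (x / (1 - x))" using v by simp
  also have "x / (1 - x) \<le> x + 2 * x\<^sup>2"
  proof -
    have "x = (x + 2 * x\<^sup>2) * (1 - x) - x\<^sup>2 * (1 - 2 * x)"
      by (simp add: algebra_simps power2_eq_square)
    also have "\<dots> \<le> (x + 2 * x\<^sup>2) * (1 - x)" using assms x by simp
    finally show ?thesis using assms x by (simp add: divide_le_eq)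
  qed
  then have "v * (x / (1 - x)) \<le> v * (x + 2 * x\<^sup>2)" using v by (intro mult_left_mono) simp_all
  finally show "v * (v * x) / ((\<theta> - v * x) * (1 - (\<theta> - v * x))) \<le> v * (x + 2 * x\<^sup>2)" .
qed (simp add: bernoulli_kl_def)

lemma bernoulli_kl_path_lower:
  fixes \<theta> t :: real
  assumes "0 < \<theta>" "\<theta> < 1" "0 \<le> t" "t < 1"
  defines "v \<equiv> \<theta> * (1 - \<theta>)"
  shows "v * (t\<^sup>2 / 2 - t ^ 3 / 3) \<le> bernoulli_kl \<theta> (\<theta> - v * t)"
proof (rule DERIV_le_imp_le[OF assms(3)])
  fix x assume x: "0 \<le> x" "x \<le> t"
  show "((\<lambda>t. bernoulli_kl \<theta> (\<theta> - v * t)) has_real_derivative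
          v * (v * x) / ((\<theta> - v * x) * (1 - (\<theta> - v * x)))) (at x)"
    using assms x unfolding v_def by (intro has_real_derivative_bernoulli_kl_path) auto
  show "((\<lambda>t. v * (t\<^sup>2 / 2 - t ^ 3 / 3)) has_real_derivative v * (x - x\<^sup>2)) (at x)"
    by (auto intro!: derivative_eq_intros simp: algebra_simps power2_eq_square)
  have "x - x\<^sup>2 \<le> x / (1 + x)"
  proof -
    have "(x - x\<^sup>2) * (1 + x) = x - x ^ 3" by (simp add: algebra_simps power2_eq_square power3_eq_cube)
    also have "\<dots> \<le> x" using x by simp
    finally show ?thesis using x by (simp add: le_divide_eq)
  qed
  moreover have v: "0 < v" using assms by (simp add: v_def)
  ultimately have "v * (x - x\<^sup>2) \<le> v * (x / (1 + x))" by (intro mult_left_mono) simp_all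
  also have "\<dots> = v * (v * x) / (v * (1 + x))" using v x by simp
  also have "\<dots> \<le> v * (v * x) / ((\<theta> - v * x) * (1 - (\<theta> - v * x)))"
  proof (rule divide_left_mono)
    show "(\<theta> - v * x) * (1 - (\<theta> - v * x)) \<le> v * (1 + x)"
      using bernoulli_variance_along_path(2)[of \<theta> x] assms x by (simp add: v_def)
    have "0 < v * (1 - x)" using v assms x by simp
    also have "\<dots> \<le> (\<theta> - v * x) * (1 - (\<theta> - v * x))"
      using bernoulli_variance_along_path(1)[of \<theta> x] assms x by (simp add: v_def)
    finally show "0 < v * (1 + x) * ((\<theta> - v * x) * (1 - (\<theta> - v * x)))"
      using v x by simp
  qed (use v x in simp)
  finally show "v * (x - x\<^sup>2) \<le> v * (v * x) / ((\<theta> - v * x) * (1 - (\<theta> - v * x)))" .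
qed (simp add: bernoulli_kl_def)

lemma bernoulli_kl_path_below_level:
  fixes \<theta> a :: real
  assumes "0 < \<theta>" "\<theta> < 1" "0 < a" "a < 1/5"
  defines "v \<equiv> \<theta> * (1 - \<theta>)" and "t \<equiv> sqrt 2 * a / sqrt (1 + 5/2 * a)"
  shows "bernoulli_kl \<theta> (\<theta> - v * t) \<le> v * a\<^sup>2"
proof -
  define \<epsilon> where "\<epsilon> = 5/2 * a"
  have v: "0 < v" using assms by (simp add: v_def)
  have \<epsilon>: "0 < \<epsilon>" "\<epsilon> < 1/2" using assms by (simp_all add: \<epsilon>_def)
  have t2: "t\<^sup>2 = 2 * a\<^sup>2 / (1 + \<epsilon>)"
    using \<epsilon> by (simp add: t_def \<epsilon>_def power_divide power_mult_distrib)
  have "t\<^sup>2 \<le> 2 * a\<^sup>2" using assms(3) \<epsilon> by (simp add: t2 divide_le_eq)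
  moreover have "a\<^sup>2 < 1/25" using power_strict_mono[of a "1/5" 2] assms by (simp add: power_divide)
  moreover have "(4/3 * t)\<^sup>2 = 16/9 * t\<^sup>2" "\<epsilon>\<^sup>2 = 25/4 * a\<^sup>2" "(1/2::real)\<^sup>2 = 1/4"
    by (simp_all add: \<epsilon>_def power_mult_distrib power_divide)
  ultimately have sq: "t\<^sup>2 \<le> (1/2)\<^sup>2" "(4/3 * t)\<^sup>2 \<le> \<epsilon>\<^sup>2"
    using zero_le_power2[of a] by linarith+
  have "t \<le> 1/2" using sq(1) by (rule power2_le_imp_le) simp
  moreover have "4/3 * t \<le> \<epsilon>" using sq(2) by (rule power2_le_imp_le) (use \<epsilon> in simp)
  moreover have "0 \<le> t" using assms(3) by (simp add: t_def)
  ultimately have t: "0 \<le> t" "t \<le> 1/2" "4/3 * t \<le> \<epsilon>" by simp_all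
  have "bernoulli_kl \<theta> (\<theta> - v * t) \<le> v * (t\<^sup>2 / 2 + 2/3 * t ^ 3)"
    using bernoulli_kl_path_upper[of \<theta> t, folded v_def] assms(1,2) t by simp
  also have "\<dots> = v * (t\<^sup>2 / 2) * (1 + 4/3 * t)"
    by (simp add: algebra_simps power2_eq_square power3_eq_cube)
  also have "\<dots> \<le> v * (t\<^sup>2 / 2) * (1 + \<epsilon>)"
    using v t by (intro mult_left_mono) auto
  also have "\<dots> = v * a\<^sup>2" using \<epsilon> by (simp add: t2 field_simps)
  finally show ?thesis .
qed

lemma bernoulli_kl_path_above_level:
  fixes \<theta> a :: real
  assumes "0 < \<theta>" "\<theta> < 1" "0 < a" "a < 1/5"
  defines "v \<equiv> \<theta> * (1 - \<theta>)" and "t \<equiv> sqrt 2 * a / sqrt (1 - 5/2 * a)"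
  shows "t < 1" and "v * a\<^sup>2 \<le> bernoulli_kl \<theta> (\<theta> - v * t)"
proof -
  define \<epsilon> where "\<epsilon> = 5/2 * a"
  have v: "0 < v" using assms by (simp add: v_def)
  have \<epsilon>: "0 < \<epsilon>" "\<epsilon> < 1/2" using assms by (simp_all add: \<epsilon>_def)
  have t2: "t\<^sup>2 = 2 * a\<^sup>2 / (1 - \<epsilon>)"
    using \<epsilon> by (simp add: t_def \<epsilon>_def power_divide power_mult_distrib)
  have "t\<^sup>2 \<le> 4 * a\<^sup>2" using assms(3) \<epsilon> by (simp add: t2 divide_le_eq)
  moreover have "a\<^sup>2 < 1/25" using power_strict_mono[of a "1/5" 2] assms by (simp add: power_divide)
  moreover have "(2/3 * t)\<^sup>2 = 4/9 * t\<^sup>2" "\<epsilon>\<^sup>2 = 25/4 * a\<^sup>2" "(1::real)\<^sup>2 = 1"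
    by (simp_all add: \<epsilon>_def power_mult_distrib power_divide)
  ultimately have sq: "t\<^sup>2 < 1\<^sup>2" "(2/3 * t)\<^sup>2 \<le> \<epsilon>\<^sup>2"
    using zero_le_power2[of a] by linarith+
  show "t < 1" using sq(1) by (rule power_less_imp_less_base) simp
  have "2/3 * t \<le> \<epsilon>" using sq(2) by (rule power2_le_imp_le) (use \<epsilon> in simp)
  moreover have "0 \<le> t" using assms(3,4) by (simp add: t_def)
  ultimately have t: "0 \<le> t" "2/3 * t \<le> \<epsilon>" by simp_all
  have "v * a\<^sup>2 = v * (t\<^sup>2 / 2) * (1 - \<epsilon>)" using \<epsilon> by (simp add: t2 field_simps)
  also have "\<dots> \<le> v * (t\<^sup>2 / 2) * (1 - 2/3 * t)"
    using v t by (intro mult_left_mono) auto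
  also have "\<dots> = v * (t\<^sup>2 / 2 - t ^ 3 / 3)"
    by (simp add: algebra_simps power2_eq_square power3_eq_cube)
  also have "\<dots> \<le> bernoulli_kl \<theta> (\<theta> - v * t)"
    using bernoulli_kl_path_lower[of \<theta> t, folded v_def] assms(1,2) t \<open>t < 1\<close> by simp
  finally show "v * a\<^sup>2 \<le> bernoulli_kl \<theta> (\<theta> - v * t)" .
qed

lemma bernoulli_kl_path_attains_level:
  fixes \<theta> a :: real
  assumes "0 < \<theta>" "\<theta> < 1" "0 < a" "a < 1/5"
  defines "v \<equiv> \<theta> * (1 - \<theta>)" and "\<epsilon> \<equiv> 5/2 * a"
  shows "\<exists>t. 0 < t \<and> t < 1 \<and> sqrt 2 * a / sqrt (1 + \<epsilon>) \<le> t \<and> t \<le> sqrt 2 * a / sqrt (1 - \<epsilon>) \<and>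
             bernoulli_kl \<theta> (\<theta> - v * t) = v * a\<^sup>2"
proof -
  define tL where "tL = sqrt 2 * a / sqrt (1 + \<epsilon>)"
  define tU where "tU = sqrt 2 * a / sqrt (1 - \<epsilon>)"
  have \<epsilon>: "0 < \<epsilon>" "\<epsilon> < 1" using assms by (simp_all add: \<epsilon>_def)
  have tL: "0 < tL" "tL \<le> tU"
    using assms \<epsilon> unfolding tL_def tU_def by (auto intro!: divide_left_mono)
  note below = bernoulli_kl_path_below_level[OF assms(1-4), folded v_def \<epsilon>_def tL_def]
  note above = bernoulli_kl_path_above_level[OF assms(1-4), folded v_def \<epsilon>_def tU_def]
  have "isCont (\<lambda>t. bernoulli_kl \<theta> (\<theta> - v * t)) x" if "tL \<le> x" "x \<le> tU" for x
    using assms(1,2) tL above(1) that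
    by (intro DERIV_isCont[OF has_real_derivative_bernoulli_kl_path[of \<theta> x, folded v_def]]) auto
  with IVT[OF below above(2) \<open>tL \<le> tU\<close>] obtain t
    where "tL \<le> t" "t \<le> tU" "bernoulli_kl \<theta> (\<theta> - v * t) = v * a\<^sup>2" by blast
  with tL above(1) show ?thesis unfolding tL_def tU_def by (intro exI[of _ t]) auto
qed

lemma neg_ln_P_CH_varphi_scaled:
  assumes "n \<ge> 1" "0 < \<theta>" "\<theta> < 1" "0 \<le> t" "t < 1"
  defines "v \<equiv> \<theta> * (1 - \<theta>)"
  shows "- ln (P_CH n \<theta> (varphi n (sqrt (real n * v) * t) \<theta>)) = real n * bernoulli_kl \<theta> (\<theta> - v * t)"
proof -
  have "sigma_hat n \<theta> * sqrt (real n * v) = sqrt (v / real n * (real n * v))"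
    unfolding sigma_hat_def v_def by (rule real_sqrt_mult[symmetric])
  also have "v / real n * (real n * v) = v * v" using assms(1) by simp
  also have "sqrt (v * v) = v" using assms(2,3) by (simp add: v_def)
  finally have "varphi n (sqrt (real n * v) * t) \<theta> = \<theta> - v * t"
    by (simp add: varphi_def mult.assoc)
  moreover have "0 \<le> v * t" "v * t \<le> v" "v < \<theta>"
    using assms by (simp_all add: v_def mult_left_le)
  ultimately show ?thesis
    using neg_ln_P_CH_eq_bernoulli_kl[of "\<theta> - v * t" \<theta> n] assms(3) by simp
qed

theorem mainTheorem11:
  fixes n :: nat and \<theta> \<alpha> :: real
  assumes "n \<ge> 1" and "0 < \<theta>" and "\<theta> < 1"
    and "real n * \<theta> \<in> \<int>"
    and "0 < \<alpha>" and "\<alpha> \<le> real n * \<theta>\<^sup>2 * (1 - \<theta>)\<^sup>2 / 8"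
  shows "\<exists>\<gamma>>0. - ln (P_CH n \<theta> (varphi n \<gamma> \<theta>)) = \<alpha> \<and>
    (let \<epsilon> = 5 / 2 * sqrt \<alpha> / sqrt (real n * \<theta> * (1 - \<theta>)) in
      sqrt (2 * \<alpha>) * (1 + \<epsilon>) powr (-1/2) \<le> \<gamma> \<and>
      \<gamma> \<le> sqrt (2 * \<alpha>) * (1 - \<epsilon>) powr (-1/2))"
proof -
  define v where "v = \<theta> * (1 - \<theta>)"
  define s where "s = sqrt (real n * v)"
  define a where "a = sqrt \<alpha> / s"
  define \<epsilon> where "\<epsilon> = 5/2 * a"
  have v: "0 < v" "v \<le> 1/4"
    using assms(2,3) zero_le_power2[of "\<theta> - 1/2"] by (auto simp: v_def algebra_simps power2_eq_square)
  have s: "0 < s" using assms(1) v by (simp add: s_def)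
  have \<alpha>_eq: "\<alpha> = real n * v * a\<^sup>2"
    using assms(1,5) v s by (simp add: a_def s_def power_divide)
  have "real n * v * a\<^sup>2 \<le> real n * v * (v / 8)"
    using assms(6) unfolding \<alpha>_eq by (simp add: v_def power_mult_distrib power2_eq_square mult_ac)
  then have "a\<^sup>2 < (1/5)\<^sup>2" using assms(1) v by (simp add: power_divide)
  then have a: "0 < a" "a < 1/5"
    using assms(5) s power_less_imp_less_base[of a 2 "1/5"] by (simp_all add: a_def)
  then obtain t where t: "0 < t" "t < 1" "sqrt 2 * a / sqrt (1 + \<epsilon>) \<le> t" "t \<le> sqrt 2 * a / sqrt (1 - \<epsilon>)"
      and level: "bernoulli_kl \<theta> (\<theta> - v * t) = v * a\<^sup>2"
    using bernoulli_kl_path_attains_level[of \<theta> a, folded v_def \<epsilon>_def] assms(2,3) by auto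
  have "- ln (P_CH n \<theta> (varphi n (s * t) \<theta>)) = \<alpha>"
    using neg_ln_P_CH_varphi_scaled[of n \<theta> t] assms(1-3) t level \<alpha>_eq by (simp add: s_def v_def)
  moreover have "0 < \<epsilon>" "\<epsilon> < 1" using a by (simp_all add: \<epsilon>_def)
  then have "sqrt (2 * \<alpha>) * (1 + \<epsilon>) powr (-1/2) \<le> s * t" "s * t \<le> sqrt (2 * \<alpha>) * (1 - \<epsilon>) powr (-1/2)"
    using mult_left_mono[OF t(3), of s] mult_left_mono[OF t(4), of s] s
    by (simp_all add: a_def real_sqrt_mult powr_minus_half)
  moreover have "5 / 2 * sqrt \<alpha> / sqrt (real n * \<theta> * (1 - \<theta>)) = \<epsilon>"
    by (simp add: \<epsilon>_def a_def s_def v_def mult.assoc)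
  ultimately show ?thesis
    using s t(1) unfolding Let_def by (metis mult_pos_pos)
qed

end
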